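(* For $K\ge 1$ let $\Theta_K$ denote the $(K-1)$-simplex and, for cell counts $N=(N_1,\ldots,N_K)$ of nonnegative integers, let the Dirichlet-DSM posterior be the random set $$\mathbf e_N(Z)=\{\theta\in\Theta_K:\ \theta_1\ge Z_1,\ldots,\theta_K\ge Z_K\},\qquad (Z_0,Z_1,\ldots,Z_K)\sim\mathrm{Dirichlet}(1,N_1,\ldots,N_K).$$ For an assertion $A\subseteq\Theta_K$ define $p=\Pr(\mathbf e_N(Z)\subseteq A)$, $q=\Pr(\mathbf e_N(Z)\subseteq A^c)$, $r=1-p-q$. Let $P=\{i_1,\ldots,i_L\}$ be any partition of $\{1,\ldots,K\}$ into $L$ nonempty blocks, and for $\theta\in\Theta_K$ define the aggregate $\tilde\theta\in\Theta_L$ by $\tilde\theta_\ell=\sum_{k\in i_\ell}\theta_k$; similarly $\tilde N_\ell=\sum_{k\in i_\ell}N_k$. Then the Dirichlet-DSM is representation invariant: for every partition $P$ and every assertion $\tilde A\subseteq\Theta_L$, the triple $(p,q,r)$ for the assertion $A=\{\theta\in\Theta_K:\tilde\theta\in\tilde A\}$ computed from the Dirichlet-DSM with counts $N$ equals the triple $(p,q,r)$ for $\tilde A$ computed from the Dirichlet-DSM on $\Theta_L$ with counts $\tilde N$.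
   Context: The Dirichlet distribution with some parameters equal to zero is understood in the degenerate sense: a coordinate whose parameter is $0$ equals $0$ almost surely. $A^c$ denotes the complement of $A$ in the relevant simplex. *)

theory Defs
  imports "HOL-Probability.Probability"
begin

text \<open>Gamma(n,1) distribution for a natural shape parameter n; shape 0 is the point mass at 0.
  For n \<ge> 1, Gamma(n,1) is the Erlang distribution with density x^(n-1) e^(-x)/(n-1)!.\<close>
definition gamma_nat :: "nat \<Rightarrow> real measure" where
  "gamma_nat n = (if n = 0 then return borel 0 else density lborel (erlang_density (n - 1) 1))"

definition dirichlet :: "nat \<Rightarrow> (nat \<Rightarrow> nat) \<Rightarrow> (nat \<Rightarrow> real) measure" where
  "dirichlet K alpha =
     distr (PiM {0..K} (\<lambda>i. gamma_nat (alpha i))) (PiM {0..K} (\<lambda>_. borel))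
       (\<lambda>g. restrict (\<lambda>i. g i / (\<Sum>j=0..K. g j)) {0..K})"

definition simplex_K :: "nat \<Rightarrow> (nat \<Rightarrow> real) set" where
  "simplex_K K = {t. (\<forall>i\<in>{1..K}. 0 \<le> t i) \<and> (\<Sum>i=1..K. t i) = 1 \<and> (\<forall>i. i \<notin> {1..K} \<longrightarrow> t i = 0)}"

definition dsm_set :: "nat \<Rightarrow> (nat \<Rightarrow> real) \<Rightarrow> (nat \<Rightarrow> real) set" where
  "dsm_set K Z = {t \<in> simplex_K K. \<forall>k\<in>{1..K}. Z k \<le> t k}"

definition dsm_law :: "nat \<Rightarrow> (nat \<Rightarrow> nat) \<Rightarrow> (nat \<Rightarrow> real) measure" where
  "dsm_law K N = dirichlet K (\<lambda>i. if i = 0 then 1 else N i)"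

definition dsm_p :: "nat \<Rightarrow> (nat \<Rightarrow> nat) \<Rightarrow> (nat \<Rightarrow> real) set \<Rightarrow> real" where
  "dsm_p K N A = measure (dsm_law K N) {Z \<in> space (dsm_law K N). dsm_set K Z \<subseteq> A}"

definition dsm_q :: "nat \<Rightarrow> (nat \<Rightarrow> nat) \<Rightarrow> (nat \<Rightarrow> real) set \<Rightarrow> real" where
  "dsm_q K N A = measure (dsm_law K N) {Z \<in> space (dsm_law K N). dsm_set K Z \<subseteq> simplex_K K - A}"

definition dsm_pqr :: "nat \<Rightarrow> (nat \<Rightarrow> nat) \<Rightarrow> (nat \<Rightarrow> real) set \<Rightarrow> real \<times> real \<times> real" where
  "dsm_pqr K N A = (dsm_p K N A, dsm_q K N A, 1 - dsm_p K N A - dsm_q K N A)"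

text \<open>Partition of {1..K} into L nonempty blocks, given by a block-label map b onto {1..L}
  (block i_l = {k \<in> {1..K}. b k = l}).\<close>
definition block :: "nat \<Rightarrow> (nat \<Rightarrow> nat) \<Rightarrow> nat \<Rightarrow> nat set" where
  "block K b l = {k \<in> {1..K}. b k = l}"

definition aggregate :: "nat \<Rightarrow> nat \<Rightarrow> (nat \<Rightarrow> nat) \<Rightarrow> (nat \<Rightarrow> 'a::comm_monoid_add) \<Rightarrow> nat \<Rightarrow> 'a" where
  "aggregate K L b x = (\<lambda>l. if l \<in> {1..L} then (\<Sum>k\<in>block K b l. x k) else 0)"

end

theory Submission
  imports Defs
begin

text \<open>A Dirichlet vector is a normalised vector of independent Gamma variables, and a sum of
  independent Gamma variables is Gamma distributed with the shapes added. Hence the block sums Z'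
  of Z ~ Dirichlet(1, N) are Dirichlet(1, N') distributed, N' being the block sums of N. On the
  other hand aggregation maps e_N(Z) onto e_N'(Z'): the block sums of a point above Z lie above Z',
  and conversely a point above Z' lifts by putting the slack of each block on one of its cells.
  So the events e_N(Z) \<subseteq> A and e_N(Z) \<subseteq> A^c are the events e_N'(Z') \<subseteq> A' and
  e_N'(Z') \<subseteq> A'^c, which have the same probabilities.\<close>

lemma sets_gamma_nat [simp, measurable_cong]: "sets (gamma_nat n) = sets borel"
  by (simp add: gamma_nat_def)

lemma space_gamma_nat [simp]: "space (gamma_nat n) = UNIV"
  by (simp add: gamma_nat_def)

lemma prob_space_gamma_nat: "prob_space (gamma_nat n)"
  unfolding gamma_nat_def by (auto intro!: prob_space_return prob_space_erlang_density)

lemma AE_gamma_nat_0: "AE x in gamma_nat 0. x = (0::real)"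
  unfolding gamma_nat_def by simp (subst AE_return; auto)

lemma AE_gamma_nat_nonneg: "AE x in gamma_nat n. 0 \<le> (x::real)"
proof (cases "n = 0")
  case True
  then show ?thesis
    unfolding gamma_nat_def by simp (subst AE_return; auto)
next
  case False
  then show ?thesis
    unfolding gamma_nat_def by simp (subst AE_density; simp add: erlang_density_def)
qed

lemma (in prob_space) distr_add_gamma_nat_0:
  fixes X Y :: "'a \<Rightarrow> real"
  assumes [measurable]: "X \<in> borel_measurable M" "Y \<in> borel_measurable M"
    and X: "distr M borel X = gamma_nat 0"
  shows "distr M borel (\<lambda>x. X x + Y x) = distr M borel Y"
proof (rule distr_cong_AE)
  have "AE v in distr M borel X. v = 0"
    unfolding X by (rule AE_gamma_nat_0)
  then show "AE x in M. X x + Y x = Y x"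
    by (subst (asm) AE_distr_iff) auto
qed auto

lemma (in prob_space) distr_add_gamma_nat:
  fixes X Y :: "'a \<Rightarrow> real"
  assumes ind: "indep_var borel X borel Y"
    and X: "distr M borel X = gamma_nat a" and Y: "distr M borel Y = gamma_nat b"
  shows "distr M borel (\<lambda>x. X x + Y x) = gamma_nat (a + b)"
proof -
  have [measurable]: "X \<in> borel_measurable M" "Y \<in> borel_measurable M"
    using ind by (auto elim: indep_var_rv1 indep_var_rv2)
  consider "a = 0" | "b = 0" | "0 < a" "0 < b"
    by blast
  then show ?thesis
  proof cases
    case 1
    then show ?thesis
      using distr_add_gamma_nat_0[of X Y] X Y by simp
  next
    case 2
    then show ?thesis
      using distr_add_gamma_nat_0[of Y X] X Y by (simp add: add.commute)
  next
    case 3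
    have lborel_borel: "distr M lborel Z = distr M borel Z" for Z :: "'a \<Rightarrow> real"
      by (rule distr_cong) auto
    have "distributed M lborel X (erlang_density (a - 1) 1)"
      "distributed M lborel Y (erlang_density (b - 1) 1)"
      using X Y 3 by (auto simp: distributed_def lborel_borel gamma_nat_def)
    then have "distributed M lborel (\<lambda>x. X x + Y x) (erlang_density (Suc (a - 1) + Suc (b - 1) - 1) 1)"
      by (intro sum_indep_erlang ind) auto
    moreover have "Suc (a - 1) + Suc (b - 1) - 1 = a + b - 1"
      using 3 by simp
    ultimately show ?thesis
      using 3 by (simp add: distributed_def lborel_borel gamma_nat_def)
  qed
qed

definition gamma_vector :: "nat set \<Rightarrow> (nat \<Rightarrow> nat) \<Rightarrow> (nat \<Rightarrow> real) measure" where
  "gamma_vector I \<alpha> = PiM I (\<lambda>i. gamma_nat (\<alpha> i))"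

lemma prob_space_gamma_vector: "prob_space (gamma_vector I \<alpha>)"
  unfolding gamma_vector_def by (intro prob_space_PiM prob_space_gamma_nat)

lemma sets_gamma_vector [measurable_cong]: "sets (gamma_vector I \<alpha>) = sets (PiM I (\<lambda>_. borel))"
  unfolding gamma_vector_def by (intro sets_PiM_cong) auto

lemma space_gamma_vector: "space (gamma_vector I \<alpha>) = PiE I (\<lambda>_. UNIV)"
  by (simp add: gamma_vector_def space_PiM)

lemma measurable_gamma_vector_component:
  "i \<in> I \<Longrightarrow> (\<lambda>g. g i) \<in> borel_measurable (gamma_vector I \<alpha>)"
  by (simp add: measurable_cong_sets[OF sets_gamma_vector refl])

lemma distr_gamma_vector_component:
  assumes "i \<in> I"
  shows "distr (gamma_vector I \<alpha>) borel (\<lambda>g. g i) = gamma_nat (\<alpha> i)"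
proof -
  have "distr (gamma_vector I \<alpha>) borel (\<lambda>g. g i)
      = distr (gamma_vector I \<alpha>) (gamma_nat (\<alpha> i)) (\<lambda>g. g i)"
    by (rule distr_cong) auto
  also have "\<dots> = gamma_nat (\<alpha> i)"
    unfolding gamma_vector_def using assms by (intro distr_PiM_component prob_space_gamma_nat)
  finally show ?thesis .
qed

lemma indep_vars_gamma_vector:
  assumes "I \<noteq> {}"
  shows "prob_space.indep_vars (gamma_vector I \<alpha>) (\<lambda>_. borel) (\<lambda>i g. g i) I"
proof -
  interpret prob_space "gamma_vector I \<alpha>"
    by (rule prob_space_gamma_vector)
  have "distr (gamma_vector I \<alpha>) (PiM I (\<lambda>_. borel)) (\<lambda>g. \<lambda>i\<in>I. g i)
      = distr (gamma_vector I \<alpha>) (gamma_vector I \<alpha>) (\<lambda>g. g)"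
    by (rule distr_cong) (auto simp: sets_gamma_vector space_gamma_vector)
  also have "\<dots> = gamma_vector I \<alpha>"
    by (rule distr_id2) simp
  also have "\<dots> = PiM I (\<lambda>i. distr (gamma_vector I \<alpha>) borel (\<lambda>g. g i))"
    unfolding gamma_vector_def[of I \<alpha>]
    by (intro PiM_cong refl) (simp add: distr_gamma_vector_component[unfolded gamma_vector_def])
  finally show ?thesis
    using assms by (subst indep_vars_iff_distr_eq_PiM') (auto intro: measurable_gamma_vector_component)
qed

lemma distr_gamma_vector_sum:
  assumes "finite J" "J \<subseteq> I"
  shows "distr (gamma_vector I \<alpha>) borel (\<lambda>g. \<Sum>j\<in>J. g j) = gamma_nat (\<Sum>j\<in>J. \<alpha> j)"
proof -
  interpret prob_space "gamma_vector I \<alpha>"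
    by (rule prob_space_gamma_vector)
  show ?thesis
    using assms
  proof (induction J rule: finite_induct)
    case empty
    show ?case
      by (simp add: gamma_nat_def)
  next
    case (insert j J)
    have "indep_vars (\<lambda>_. borel) (\<lambda>i g. g i) (insert j J)"
      using indep_vars_gamma_vector[of I \<alpha>] insert.prems by (auto intro: indep_vars_subset)
    then have "indep_var borel (\<lambda>g. g j) borel (\<lambda>g. \<Sum>i\<in>J. g i)"
      using insert.hyps by (intro indep_vars_sum) auto
    then have "distr (gamma_vector I \<alpha>) borel (\<lambda>g. g j + (\<Sum>i\<in>J. g i))
        = gamma_nat (\<alpha> j + (\<Sum>i\<in>J. \<alpha> i))"
      using insert by (intro distr_add_gamma_nat distr_gamma_vector_component) auto
    then show ?case
      using insert.hyps by simp
  qed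
qed

lemma distr_gamma_vector_block_sums:
  assumes "finite I" "I \<noteq> {}" "finite Ls" "Ls \<noteq> {}"
    and B: "\<And>l. l \<in> Ls \<Longrightarrow> B l \<subseteq> I" and disj: "disjoint_family_on B Ls"
  shows "distr (gamma_vector I \<alpha>) (PiM Ls (\<lambda>_. borel)) (\<lambda>g. \<lambda>l\<in>Ls. \<Sum>k\<in>B l. g k)
       = gamma_vector Ls (\<lambda>l. \<Sum>k\<in>B l. \<alpha> k)"
proof -
  interpret prob_space "gamma_vector I \<alpha>"
    by (rule prob_space_gamma_vector)
  have "indep_vars (\<lambda>l. PiM (B l) (\<lambda>_. borel)) (\<lambda>l g. restrict (\<lambda>i. g i) (B l)) Ls"
    using indep_vars_restrict[OF indep_vars_gamma_vector[OF \<open>I \<noteq> {}\<close>] B disj] by simp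
  then have "indep_vars (\<lambda>_. borel) (\<lambda>l g. (\<lambda>x. \<Sum>k\<in>B l. x k) (restrict (\<lambda>i. g i) (B l))) Ls"
    by (rule indep_vars_compose2) (auto intro!: borel_measurable_sum measurable_component_singleton)
  then have "indep_vars (\<lambda>_. borel) (\<lambda>l g. \<Sum>k\<in>B l. g k) Ls"
    by (rule indep_vars_cong[THEN iffD1, rotated -1]) auto
  moreover have "random_variable borel (\<lambda>g. \<Sum>k\<in>B l. g k)" if "l \<in> Ls" for l
    using B that by (auto intro!: borel_measurable_sum measurable_gamma_vector_component)
  ultimately have "distr (gamma_vector I \<alpha>) (PiM Ls (\<lambda>_. borel)) (\<lambda>g. \<lambda>l\<in>Ls. \<Sum>k\<in>B l. g k)
      = PiM Ls (\<lambda>l. distr (gamma_vector I \<alpha>) borel (\<lambda>g. \<Sum>k\<in>B l. g k))"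
    using \<open>Ls \<noteq> {}\<close> by (subst (asm) indep_vars_iff_distr_eq_PiM') auto
  also have "\<dots> = gamma_vector Ls (\<lambda>l. \<Sum>k\<in>B l. \<alpha> k)"
    unfolding gamma_vector_def[of Ls] using B \<open>finite I\<close>
    by (intro PiM_cong refl distr_gamma_vector_sum) (auto intro: finite_subset)
  finally show ?thesis .
qed

lemma AE_gamma_vector_nonneg: "finite I \<Longrightarrow> AE g in gamma_vector I \<alpha>. \<forall>i\<in>I. 0 \<le> g i"
  unfolding gamma_vector_def
  by (intro AE_finite_allI AE_PiM_component[where P="\<lambda>x. 0 \<le> x"]
      prob_space_gamma_nat AE_gamma_nat_nonneg)

definition normalize_on :: "nat \<Rightarrow> (nat \<Rightarrow> real) \<Rightarrow> nat \<Rightarrow> real" where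
  "normalize_on K g = (\<lambda>i\<in>{0..K}. g i / (\<Sum>j=0..K. g j))"

lemma measurable_normalize_on:
  "normalize_on K \<in> measurable (PiM {0..K} (\<lambda>_. borel)) (PiM {0..K} (\<lambda>_. borel))"
  unfolding normalize_on_def
  by (intro measurable_restrict borel_measurable_divide borel_measurable_sum
      measurable_component_singleton) auto

lemma dirichlet_eq_distr_normalize_on:
  "dirichlet K \<alpha> = distr (gamma_vector {0..K} \<alpha>) (PiM {0..K} (\<lambda>_. borel)) (normalize_on K)"
  unfolding dirichlet_def gamma_vector_def normalize_on_def ..

lemma sets_dirichlet [measurable_cong]: "sets (dirichlet K \<alpha>) = sets (PiM {0..K} (\<lambda>_. borel))"
  by (simp add: dirichlet_def)

lemma space_dirichlet: "space (dirichlet K \<alpha>) = PiE {0..K} (\<lambda>_. UNIV)"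
  by (simp add: dirichlet_def space_PiM)

lemma AE_dirichlet_nonneg: "AE Z in dirichlet K \<alpha>. \<forall>i\<in>{0..K}. 0 \<le> Z i"
proof -
  have "AE g in gamma_vector {0..K} \<alpha>. \<forall>i\<in>{0..K}. 0 \<le> g i"
    by (rule AE_gamma_vector_nonneg) simp
  then have "AE g in gamma_vector {0..K} \<alpha>. \<forall>i\<in>{0..K}. 0 \<le> normalize_on K g i"
    by eventually_elim (auto simp: normalize_on_def intro!: divide_nonneg_nonneg sum_nonneg)
  moreover have "normalize_on K \<in> measurable (gamma_vector {0..K} \<alpha>) (PiM {0..K} (\<lambda>_. borel))"
    using measurable_normalize_on by (simp add: measurable_cong_sets[OF sets_gamma_vector refl])
  moreover have "{Z \<in> space (PiM {0..K} (\<lambda>_. borel)). \<forall>i\<in>{0..K}. 0 \<le> Z i}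
      \<in> sets (PiM {0..K} (\<lambda>_. borel :: real measure))"
    by measurable
  ultimately show ?thesis
    unfolding dirichlet_eq_distr_normalize_on by (simp add: AE_distr_iff)
qed

lemma block_sums_normalize_on:
  assumes "disjoint_family_on B {0..L}" and cover: "(\<Union>l\<in>{0..L}. B l) = {0..K}"
  shows "(\<lambda>l\<in>{0..L}. \<Sum>k\<in>B l. normalize_on K g k) = normalize_on L (\<lambda>l\<in>{0..L}. \<Sum>k\<in>B l. g k)"
proof -
  have B: "B l \<subseteq> {0..K}" if "l \<in> {0..L}" for l
    using cover that by blast
  then have "finite (B l)" if "l \<in> {0..L}" for l
    using that finite_subset by blast
  then have total: "(\<Sum>l=0..L. \<Sum>k\<in>B l. g k) = (\<Sum>k=0..K. g k)"
    using sum.UNION_disjoint_family[of "{0..L}" B g] assms by simp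
  show ?thesis
    unfolding normalize_on_def[of L]
  proof (rule restrict_ext)
    fix l assume "l \<in> {0..L}"
    then have "(\<Sum>k\<in>B l. normalize_on K g k) = (\<Sum>k\<in>B l. g k) / (\<Sum>k=0..K. g k)"
      unfolding sum_divide_distrib using B[OF \<open>l \<in> {0..L}\<close>] by (intro sum.cong) (auto simp: normalize_on_def)
    then show "(\<Sum>k\<in>B l. normalize_on K g k)
        = (\<lambda>l\<in>{0..L}. \<Sum>k\<in>B l. g k) l / (\<Sum>j=0..L. (\<lambda>l\<in>{0..L}. \<Sum>k\<in>B l. g k) j)"
      using \<open>l \<in> {0..L}\<close> total by simp
  qed
qed

lemma dirichlet_block_sums:
  assumes disj: "disjoint_family_on B {0..L}" and cover: "(\<Union>l\<in>{0..L}. B l) = {0..K}"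
  shows "distr (dirichlet K \<alpha>) (PiM {0..L} (\<lambda>_. borel)) (\<lambda>Z. \<lambda>l\<in>{0..L}. \<Sum>k\<in>B l. Z k)
       = dirichlet L (\<lambda>l. \<Sum>k\<in>B l. \<alpha> k)"
proof -
  let ?PK = "PiM {0..K} (\<lambda>_. borel :: real measure)"
  let ?PL = "PiM {0..L} (\<lambda>_. borel :: real measure)"
  let ?sums = "\<lambda>Z. \<lambda>l\<in>{0..L}. \<Sum>k\<in>B l. Z k"
  let ?\<Gamma> = "gamma_vector {0..K} \<alpha>"
  have B: "B l \<subseteq> {0..K}" if "l \<in> {0..L}" for l
    using cover that by blast
  have sums: "?sums \<in> measurable ?PK ?PL"
    using B by (intro measurable_restrict borel_measurable_sum measurable_component_singleton) fastforce+
  have normalize: "normalize_on K \<in> measurable ?\<Gamma> ?PK"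
    using measurable_normalize_on by (simp add: measurable_cong_sets[OF sets_gamma_vector refl])
  have "distr (dirichlet K \<alpha>) ?PL ?sums = distr ?\<Gamma> ?PL (?sums \<circ> normalize_on K)"
    unfolding dirichlet_eq_distr_normalize_on by (rule distr_distr[OF sums normalize])
  also have "?sums \<circ> normalize_on K = normalize_on L \<circ> ?sums"
    using block_sums_normalize_on[OF disj cover] by (simp add: fun_eq_iff del: restrict_apply)
  also have "distr ?\<Gamma> ?PL (normalize_on L \<circ> ?sums) = distr (distr ?\<Gamma> ?PL ?sums) ?PL (normalize_on L)"
    using sums by (intro distr_distr[symmetric] measurable_normalize_on)
      (simp add: measurable_cong_sets[OF sets_gamma_vector refl])
  also have "distr ?\<Gamma> ?PL ?sums = gamma_vector {0..L} (\<lambda>l. \<Sum>k\<in>B l. \<alpha> k)"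
    using B disj by (intro distr_gamma_vector_block_sums) auto
  finally show ?thesis
    unfolding dirichlet_eq_distr_normalize_on .
qed

lemma block_subset: "block K b l \<subseteq> {1..K}"
  by (auto simp: block_def)

lemma finite_block [simp]: "finite (block K b l)"
  using finite_subset[OF block_subset] by blast

lemma sum_aggregate:
  assumes "b ` {1..K} \<subseteq> {1..L}"
  shows "(\<Sum>l=1..L. aggregate K L b t l) = (\<Sum>k=1..K. t k)"
proof -
  have "(\<Sum>l=1..L. \<Sum>k\<in>{k\<in>{1..K}. b k = l}. t k) = (\<Sum>k=1..K. t k)"
    by (rule sum.group) (use assms in auto)
  then show ?thesis
    by (simp add: aggregate_def block_def)
qed

lemma dsm_set_subset_simplex: "dsm_set K Z \<subseteq> simplex_K K"
  by (auto simp: dsm_set_def)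

text \<open>Z_0 is carried along unchanged. Clipping at 0 changes no constraint on the simplex, and makes
  the image identity below hold for every Z rather than only almost surely.\<close>
definition aggregate_lower_bounds :: "nat \<Rightarrow> nat \<Rightarrow> (nat \<Rightarrow> nat) \<Rightarrow> (nat \<Rightarrow> real) \<Rightarrow> nat \<Rightarrow> real" where
  "aggregate_lower_bounds K L b Z =
     (\<lambda>l\<in>{0..L}. if l = 0 then Z 0 else \<Sum>k\<in>block K b l. max (Z k) 0)"

lemma aggregate_dsm_set_subset:
  assumes "b ` {1..K} \<subseteq> {1..L}" and t: "t \<in> dsm_set K Z"
  shows "aggregate K L b t \<in> dsm_set L (aggregate_lower_bounds K L b Z)"
proof -
  have t_nonneg: "\<forall>k\<in>{1..K}. 0 \<le> t k" and t_sum: "(\<Sum>k=1..K. t k) = 1"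
    and t_ge: "\<forall>k\<in>{1..K}. Z k \<le> t k"
    using t by (auto simp: dsm_set_def simplex_K_def)
  have "0 \<le> (\<Sum>k\<in>block K b l. t k)" for l
    using t_nonneg block_subset[of K b l] by (intro sum_nonneg) auto
  moreover have "(\<Sum>k\<in>block K b l. max (Z k) 0) \<le> (\<Sum>k\<in>block K b l. t k)" for l
    using t_nonneg t_ge block_subset by (intro sum_mono) (auto simp: subset_iff)
  moreover have "(\<Sum>l=1..L. aggregate K L b t l) = 1"
    using sum_aggregate[OF assms(1), of t] t_sum by simp
  ultimately show ?thesis
    by (auto simp: dsm_set_def simplex_K_def aggregate_def aggregate_lower_bounds_def)
qed

lemma aggregate_lift:
  fixes m p :: "nat \<Rightarrow> real"
  assumes part: "b ` {1..K} = {1..L}"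
    and below: "\<And>l. l \<in> {1..L} \<Longrightarrow> (\<Sum>k\<in>block K b l. m k) \<le> p l"
    and outside: "\<And>l. l \<notin> {1..L} \<Longrightarrow> p l = 0"
  obtains t where "aggregate K L b t = p" "\<And>k. k \<in> {1..K} \<Longrightarrow> m k \<le> t k"
    "\<And>k. k \<notin> {1..K} \<Longrightarrow> t k = 0"
proof -
  have "\<exists>k. k \<in> block K b l" if "l \<in> {1..L}" for l
  proof -
    from that part obtain k where "k \<in> {1..K}" "b k = l"
      by (metis imageE)
    then show ?thesis
      by (auto simp: block_def)
  qed
  then obtain rep where rep: "\<And>l. l \<in> {1..L} \<Longrightarrow> rep l \<in> block K b l"
    by metis
  define slack where "slack l = p l - (\<Sum>k\<in>block K b l. m k)" for l
  define t where "t k = (if k \<in> {1..K} then m k + (if k = rep (b k) then slack (b k) else 0) else 0)" for k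
  have t_ge: "m k \<le> t k" if "k \<in> {1..K}" for k
  proof -
    have "b k \<in> {1..L}"
      using part that by auto
    then have "0 \<le> slack (b k)"
      using below by (simp add: slack_def)
    then show ?thesis
      using that by (simp add: t_def)
  qed
  have t_block: "(\<Sum>k\<in>block K b l. t k) = p l" if l: "l \<in> {1..L}" for l
  proof -
    have "(\<Sum>k\<in>block K b l. t k) = (\<Sum>k\<in>block K b l. m k + (if k = rep l then slack l else 0))"
      by (intro sum.cong) (auto simp: t_def block_def)
    also have "\<dots> = (\<Sum>k\<in>block K b l. m k) + slack l"
      using rep[OF l] by (simp add: sum.distrib)
    finally show ?thesis
      by (simp add: slack_def)
  qed
  have "aggregate K L b t = p"
    using t_block outside by (intro ext) (simp add: aggregate_def)
  moreover have "t k = 0" if "k \<notin> {1..K}" for k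
    unfolding t_def by (simp only: that if_False)
  ultimately show ?thesis
    using that t_ge by blast
qed

lemma dsm_set_subset_aggregate_image:
  assumes part: "b ` {1..K} = {1..L}" and p: "p \<in> dsm_set L (aggregate_lower_bounds K L b Z)"
  shows "p \<in> aggregate K L b ` dsm_set K Z"
proof -
  have p_sum: "(\<Sum>l=1..L. p l) = 1" and p_zero: "\<And>l. l \<notin> {1..L} \<Longrightarrow> p l = 0"
    and p_ge: "\<And>l. l \<in> {1..L} \<Longrightarrow> (\<Sum>k\<in>block K b l. max (Z k) 0) \<le> p l"
    using p by (auto simp: dsm_set_def simplex_K_def aggregate_lower_bounds_def)
  obtain t where agg: "aggregate K L b t = p"
    and t_ge: "\<And>k. k \<in> {1..K} \<Longrightarrow> max (Z k) 0 \<le> t k"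
    and t_zero: "\<And>k. k \<notin> {1..K} \<Longrightarrow> t k = 0"
    using aggregate_lift[OF part p_ge p_zero] by blast
  have "0 \<le> t k \<and> Z k \<le> t k" if "k \<in> {1..K}" for k
    using t_ge[OF that] by simp
  moreover have "(\<Sum>k=1..K. t k) = 1"
    using sum_aggregate[OF equalityD1[OF part], of t] agg p_sum by simp
  ultimately have "t \<in> dsm_set K Z"
    using t_zero unfolding dsm_set_def simplex_K_def by blast
  with agg show ?thesis
    by blast
qed

lemma image_aggregate_dsm_set:
  assumes "b ` {1..K} = {1..L}"
  shows "aggregate K L b ` dsm_set K Z = dsm_set L (aggregate_lower_bounds K L b Z)"
  using aggregate_dsm_set_subset[OF equalityD1[OF assms]] dsm_set_subset_aggregate_image[OF assms] by blast

lemma measurable_aggregate_lower_bounds: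
  "aggregate_lower_bounds K L b \<in> measurable (PiM {0..K} (\<lambda>_. borel)) (PiM {0..L} (\<lambda>_. borel))"
  unfolding aggregate_lower_bounds_def
proof (intro measurable_restrict)
  fix l
  have "(\<lambda>Z. max (Z k) 0) \<in> borel_measurable (PiM {0..K} (\<lambda>_. borel :: real measure))"
    if "k \<in> block K b l" for k
  proof -
    have "k \<in> {0..K}"
      using that block_subset[of K b l] by auto
    then show ?thesis
      using measurable_component_singleton[of k "{0..K}" "\<lambda>_. borel"] by measurable
  qed
  then show "(\<lambda>Z. if l = 0 then Z 0 else \<Sum>k\<in>block K b l. max (Z k) 0)
      \<in> borel_measurable (PiM {0..K} (\<lambda>_. borel :: real measure))"
    by (cases "l = 0") (auto intro!: borel_measurable_sum measurable_component_singleton)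
qed

lemma blocks_with_0_partition:
  assumes "b ` {1..K} = {1..L}"
  defines "B \<equiv> \<lambda>l. if l = 0 then {0} else block K b l"
  shows "disjoint_family_on B {0..L}" and "(\<Union>l\<in>{0..L}. B l) = {0..K}"
proof -
  show "disjoint_family_on B {0..L}"
    by (auto simp: disjoint_family_on_def B_def block_def)
  show "(\<Union>l\<in>{0..L}. B l) = {0..K}"
  proof
    show "(\<Union>l\<in>{0..L}. B l) \<subseteq> {0..K}"
      by (auto simp: B_def block_def)
    show "{0..K} \<subseteq> (\<Union>l\<in>{0..L}. B l)"
    proof
      fix k assume "k \<in> {0..K}"
      then consider "k = 0" | "k \<in> {1..K}"
        by fastforce
      then show "k \<in> (\<Union>l\<in>{0..L}. B l)"
      proof cases
        case 1
        then show ?thesis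
          by (auto simp: B_def intro!: UN_I[of 0])
      next
        case 2
        then have "b k \<in> {1..L}"
          using assms(1) by auto
        moreover from 2 this have "k \<in> B (b k)"
          by (simp add: B_def block_def)
        ultimately show ?thesis
          by (auto intro!: UN_I[of "b k"])
      qed
    qed
  qed
qed

lemma dsm_law_aggregate:
  assumes part: "b ` {1..K} = {1..L}"
  shows "distr (dsm_law K N) (PiM {0..L} (\<lambda>_. borel)) (aggregate_lower_bounds K L b)
       = dsm_law L (aggregate K L b N)"
proof -
  define B where "B l = (if l = 0 then {0} else block K b l)" for l
  define \<alpha> where "\<alpha> i = (if i = 0 then 1 else N i)" for i
  let ?PL = "PiM {0..L} (\<lambda>_. borel :: real measure)"
  have B: "disjoint_family_on B {0..L}" "(\<Union>l\<in>{0..L}. B l) = {0..K}"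
    using blocks_with_0_partition[OF part] unfolding B_def by blast+
  have "distr (dsm_law K N) ?PL (aggregate_lower_bounds K L b)
      = distr (dsm_law K N) ?PL (\<lambda>Z. \<lambda>l\<in>{0..L}. \<Sum>k\<in>B l. Z k)"
  proof (rule distr_cong_AE[OF refl refl])
    show "AE Z in dsm_law K N. aggregate_lower_bounds K L b Z = (\<lambda>l\<in>{0..L}. \<Sum>k\<in>B l. Z k)"
      using AE_dirichlet_nonneg[of K] unfolding dsm_law_def
      by eventually_elim
        (use block_subset in \<open>fastforce simp: aggregate_lower_bounds_def B_def intro!: sum.cong\<close>)
    show "aggregate_lower_bounds K L b \<in> measurable (dsm_law K N) ?PL"
      using measurable_aggregate_lower_bounds by (simp add: dsm_law_def measurable_cong_sets[OF sets_dirichlet refl])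
    show "(\<lambda>Z. \<lambda>l\<in>{0..L}. \<Sum>k\<in>B l. Z k) \<in> measurable (dsm_law K N) ?PL"
      using B(2) unfolding dsm_law_def measurable_cong_sets[OF sets_dirichlet refl]
      by (intro measurable_restrict borel_measurable_sum measurable_component_singleton) fastforce+
  qed
  also have "\<dots> = dirichlet L (\<lambda>l. \<Sum>k\<in>B l. \<alpha> k)"
    unfolding dsm_law_def \<alpha>_def[symmetric] by (rule dirichlet_block_sums[OF B])
  also have "(\<lambda>l. \<Sum>k\<in>B l. \<alpha> k) = (\<lambda>l. if l = 0 then 1 else aggregate K L b N l)"
    using part by (force simp: fun_eq_iff B_def \<alpha>_def aggregate_def block_def intro!: sum.cong)
  finally show ?thesis
    unfolding dsm_law_def .
qed

lemma measure_dsm_law_aggregate_event: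
  assumes part: "b ` {1..K} = {1..L}"
    and S: "{W \<in> space (dsm_law L (aggregate K L b N)). P (dsm_set L W)}
              \<in> sets (dsm_law L (aggregate K L b N))"
  shows "measure (dsm_law K N)
           {Z \<in> space (dsm_law K N). P (dsm_set L (aggregate_lower_bounds K L b Z))}
       = measure (dsm_law L (aggregate K L b N))
           {W \<in> space (dsm_law L (aggregate K L b N)). P (dsm_set L W)}"
proof -
  let ?F = "aggregate_lower_bounds K L b"
  let ?PL = "PiM {0..L} (\<lambda>_. borel :: real measure)"
  let ?S = "{W \<in> space (dsm_law L (aggregate K L b N)). P (dsm_set L W)}"
  have F: "?F \<in> measurable (dsm_law K N) ?PL"
    using measurable_aggregate_lower_bounds
    by (simp add: dsm_law_def measurable_cong_sets[OF sets_dirichlet refl])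
  have "{Z \<in> space (dsm_law K N). P (dsm_set L (?F Z))} = ?F -` ?S \<inter> space (dsm_law K N)"
    by (auto simp: dsm_law_def space_dirichlet aggregate_lower_bounds_def)
  then have "measure (dsm_law K N) {Z \<in> space (dsm_law K N). P (dsm_set L (?F Z))}
      = measure (distr (dsm_law K N) ?PL ?F) ?S"
    using F S by (simp add: measure_distr dsm_law_def sets_dirichlet)
  also have "distr (dsm_law K N) ?PL ?F = dsm_law L (aggregate K L b N)"
    by (rule dsm_law_aggregate[OF part])
  finally show ?thesis .
qed

theorem theorem4:
  fixes K L :: nat and N :: "nat \<Rightarrow> nat" and b :: "nat \<Rightarrow> nat"
    and At :: "(nat \<Rightarrow> real) set"
  assumes "1 \<le> K"
    and partition: "b ` {1..K} = {1..L}"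
    and At_sub: "At \<subseteq> simplex_K L"
    and meas_p: "{Z \<in> space (dsm_law L (aggregate K L b N)). dsm_set L Z \<subseteq> At}
                   \<in> sets (dsm_law L (aggregate K L b N))"
    and meas_q: "{Z \<in> space (dsm_law L (aggregate K L b N)). dsm_set L Z \<subseteq> simplex_K L - At}
                   \<in> sets (dsm_law L (aggregate K L b N))"
  shows "dsm_pqr K N {t \<in> simplex_K K. aggregate K L b t \<in> At}
       = dsm_pqr L (aggregate K L b N) At"
proof -
  define A where "A = {t \<in> simplex_K K. aggregate K L b t \<in> At}"
  let ?Z' = "aggregate_lower_bounds K L b"
  have image: "aggregate K L b ` dsm_set K Z = dsm_set L (?Z' Z)" for Z
    by (rule image_aggregate_dsm_set[OF partition])
  have "dsm_set K Z \<subseteq> A \<longleftrightarrow> dsm_set L (?Z' Z) \<subseteq> At" for Z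
    using dsm_set_subset_simplex[of K Z] unfolding A_def image[symmetric] by blast
  then have p: "dsm_p K N A = dsm_p L (aggregate K L b N) At"
    unfolding dsm_p_def using measure_dsm_law_aggregate_event[OF partition meas_p] by simp
  have "dsm_set K Z \<subseteq> simplex_K K - A \<longleftrightarrow> dsm_set L (?Z' Z) \<subseteq> simplex_K L - At" for Z
    using dsm_set_subset_simplex[of K Z] dsm_set_subset_simplex[of L "?Z' Z"]
    unfolding A_def image[symmetric] by blast
  then have q: "dsm_q K N A = dsm_q L (aggregate K L b N) At"
    unfolding dsm_q_def using measure_dsm_law_aggregate_event[OF partition meas_q] by simp
  show ?thesis
    unfolding A_def[symmetric] dsm_pqr_def p q ..
qed

end
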